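(* Let $D \geq 1$, let $f \colon \mathbb{Z}^D \to \mathbb{R}$ be a discrete signal in $l_1$, let $T \colon \mathbb{Z}^D \times \mathbb{R}_+ \to \mathbb{R}$ be a discrete pre-scale-space family of kernels, and let $L \colon \mathbb{Z}^D \times \mathbb{R}_+ \to \mathbb{R}$ be the discrete pre-scale-space representation of $f$ generated by $T$. Then $L$ satisfies the differential equation $$\partial_s L = \mathcal{A} L$$ for some linear and shift-invariant operator $\mathcal{A}$.
   Context: A one-parameter family of kernels $T \colon \mathbb{Z}^D \times \mathbb{R}_+ \to \mathbb{R}$ is a discrete pre-scale-space family of kernels if (i) $T(\cdot;0) = \delta(\cdot)$ (the discrete delta function), (ii) the semi-group property $T(\cdot;s_1) * T(\cdot;s_2) = T(\cdot;s_1+s_2)$ holds for all $s_1,s_2 \ge 0$ (where $*$ is discrete convolution over $\mathbb{Z}^D$), and (iii) $\| T(\cdot;s) - \delta(\cdot)\|_1 \to 0$ as $s \downarrow 0$. Given such $T$ and a signal $f\colon \mathbb{Z}^D \to \mathbb{R}$, the discrete pre-scale-space representation of $f$ generated by $T$ is $L(x;s) = \sum_{\xi \in \mathbb{Z}^D} T(\xi;s)\, f(x-\xi)$. Here $\partial_s L$ denotes the derivative of $L$ with respect to the scale parameter $s$. *)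

theory Defs
  imports "HOL-Analysis.Analysis"
begin

text \<open>Discrete signals on Z^D are functions on the lattice int^'d ('d a finite
index type of cardinality D >= 1).\<close>

type_synonym 'd dsignal = "int ^ 'd \<Rightarrow> real"

definition ddelta :: "'d::finite dsignal" where
  "ddelta x = (if x = 0 then 1 else 0)"

definition in_l1 :: "'d::finite dsignal \<Rightarrow> bool" where
  "in_l1 u \<longleftrightarrow> (\<lambda>x. \<bar>u x\<bar>) summable_on UNIV"

definition l1_norm :: "'d::finite dsignal \<Rightarrow> real" where
  "l1_norm u = (\<Sum>\<^sub>\<infinity>x. \<bar>u x\<bar>)"

definition dconv :: "'d::finite dsignal \<Rightarrow> 'd dsignal \<Rightarrow> 'd dsignal" where
  "dconv g h = (\<lambda>x. \<Sum>\<^sub>\<infinity>\<xi>. g \<xi> * h (x - \<xi>))"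

definition pre_scale_space_kernel :: "(int ^ 'd::finite \<Rightarrow> real \<Rightarrow> real) \<Rightarrow> bool" where
  "pre_scale_space_kernel T \<longleftrightarrow>
     (\<lambda>x. T x 0) = ddelta \<and>
     (\<forall>s1 s2. s1 \<ge> 0 \<longrightarrow> s2 \<ge> 0 \<longrightarrow>
        dconv (\<lambda>x. T x s1) (\<lambda>x. T x s2) = (\<lambda>x. T x (s1 + s2))) \<and>
     (\<forall>\<^sub>F s in at_right 0. in_l1 (\<lambda>x. T x s - ddelta x)) \<and>
     ((\<lambda>s. l1_norm (\<lambda>x. T x s - ddelta x)) \<longlongrightarrow> 0) (at_right 0)"

definition pre_scale_space_rep ::
    "(int ^ 'd::finite \<Rightarrow> real \<Rightarrow> real) \<Rightarrow> 'd dsignal \<Rightarrow> int ^ 'd \<Rightarrow> real \<Rightarrow> real" where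
  "pre_scale_space_rep T f x s = (\<Sum>\<^sub>\<infinity>\<xi>. T \<xi> s * f (x - \<xi>))"

definition linear_on_l1 :: "('d::finite dsignal \<Rightarrow> 'd dsignal) \<Rightarrow> bool" where
  "linear_on_l1 A \<longleftrightarrow> (\<forall>u v a b. in_l1 u \<longrightarrow> in_l1 v \<longrightarrow>
      A (\<lambda>x. a * u x + b * v x) = (\<lambda>x. a * A u x + b * A v x))"

definition shift_invariant_on_l1 :: "('d::finite dsignal \<Rightarrow> 'd dsignal) \<Rightarrow> bool" where
  "shift_invariant_on_l1 A \<longleftrightarrow> (\<forall>u y. in_l1 u \<longrightarrow>
      A (\<lambda>x. u (x - y)) = (\<lambda>x. A u (x - y)))"

end

theory Submission
  imports Defs
begin

text \<open>The kernels \<open>T(\<cdot>;s)\<close> form a semigroup \<open>P\<close> in the commutative Banach algebra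
  \<open>l\<^sub>1(\<int>\<^sup>D)\<close> under convolution, and condition (iii) says that \<open>P s \<rightarrow> 1\<close> in norm as
  \<open>s \<down> 0\<close>. Such a semigroup is norm-continuous on \<open>[0,\<infinity>)\<close> and, for small \<open>e\<close>, the
  average \<open>(1/e) \<integral>\<^sub>0\<^sup>e P\<close> is invertible; writing \<open>P s = (\<integral>\<^sub>s\<^sup>s\<^sup>+\<^sup>e P) W\<close> shows that
  \<open>P\<close> is differentiable with \<open>P' s = P s * H\<close>. Applying the bounded functional
  \<open>a \<mapsto> (a * f)(x)\<close> gives \<open>\<partial>\<^sub>s L = h * L\<close>, where \<open>h\<close> is the \<open>l\<^sub>1\<close> function
  representing \<open>H\<close>, and convolution with \<open>h\<close> is linear and shift-invariant.\<close>

section \<open>Convolution on abelian groups\<close>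

definition conv :: "('g::ab_group_add \<Rightarrow> real) \<Rightarrow> ('g \<Rightarrow> real) \<Rightarrow> 'g \<Rightarrow> real" where
  "conv u v = (\<lambda>x. \<Sum>\<^sub>\<infinity>\<xi>. u \<xi> * v (x - \<xi>))"

definition unit_impulse :: "'g::zero \<Rightarrow> real" where
  "unit_impulse x = (if x = 0 then 1 else 0)"

lemma summable_on_abs_iff_real: "(\<lambda>x. \<bar>u x\<bar>) summable_on A \<longleftrightarrow> (u :: 'a \<Rightarrow> real) summable_on A"
  using summable_on_iff_abs_summable_on_real[of u A] by simp

lemma abs_le_infsum_abs: "(u :: 'a \<Rightarrow> real) summable_on UNIV \<Longrightarrow> \<bar>u y\<bar> \<le> (\<Sum>\<^sub>\<infinity>x. \<bar>u x\<bar>)"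
  using finite_sum_le_infsum[of "\<lambda>x. \<bar>u x\<bar>" UNIV "{y}"] by (simp add: summable_on_abs_iff_real)

lemma infsum_abs_add_le:
  fixes u v :: "'a \<Rightarrow> real"
  assumes "u summable_on UNIV" "v summable_on UNIV"
  shows "(\<Sum>\<^sub>\<infinity>x. \<bar>u x + v x\<bar>) \<le> (\<Sum>\<^sub>\<infinity>x. \<bar>u x\<bar>) + (\<Sum>\<^sub>\<infinity>x. \<bar>v x\<bar>)"
proof -
  have "(\<Sum>\<^sub>\<infinity>x. \<bar>u x + v x\<bar>) \<le> (\<Sum>\<^sub>\<infinity>x. \<bar>u x\<bar> + \<bar>v x\<bar>)"
    by (rule infsum_mono) (use assms in \<open>auto intro!: summable_on_add simp: summable_on_abs_iff_real\<close>)
  also have "\<dots> = (\<Sum>\<^sub>\<infinity>x. \<bar>u x\<bar>) + (\<Sum>\<^sub>\<infinity>x. \<bar>v x\<bar>)"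
    by (rule infsum_add) (use assms in \<open>auto simp: summable_on_abs_iff_real\<close>)
  finally show ?thesis .
qed

lemma product_summable_on:
  fixes u v :: "'a \<Rightarrow> real"
  assumes u: "u summable_on UNIV" and v: "v summable_on UNIV"
  shows "(\<lambda>(a, b). u a * v b) summable_on UNIV"
proof -
  have au: "(\<lambda>a. \<bar>u a\<bar>) summable_on UNIV" and av: "(\<lambda>b. \<bar>v b\<bar>) summable_on UNIV"
    using u v by (simp_all add: summable_on_abs_iff_real)
  have "(\<lambda>(a, b). \<bar>u a\<bar> * \<bar>v b\<bar>) summable_on Sigma UNIV (\<lambda>_. UNIV)"
  proof (rule summable_on_SigmaI[where g="\<lambda>a. \<bar>u a\<bar> * (\<Sum>\<^sub>\<infinity>b. \<bar>v b\<bar>)"])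
    fix a :: 'a
    show "((\<lambda>b. case (a, b) of (a, b) \<Rightarrow> \<bar>u a\<bar> * \<bar>v b\<bar>) has_sum \<bar>u a\<bar> * (\<Sum>\<^sub>\<infinity>b. \<bar>v b\<bar>)) UNIV"
      using has_sum_cmult_right[OF has_sum_infsum[OF av], of "\<bar>u a\<bar>"] by simp
  next
    show "(\<lambda>a. \<bar>u a\<bar> * (\<Sum>\<^sub>\<infinity>b. \<bar>v b\<bar>)) summable_on UNIV"
      by (rule summable_on_cmult_left[OF au])
  qed auto
  then have "(\<lambda>p. \<bar>case p of (a, b) \<Rightarrow> u a * v b\<bar>) summable_on UNIV"
    by (simp add: case_prod_unfold abs_mult)
  then show ?thesis by (simp only: summable_on_abs_iff_real)
qed

lemma conv_pairs_summable_on: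
  fixes u v :: "'g::ab_group_add \<Rightarrow> real"
  assumes "u summable_on UNIV" "v summable_on UNIV"
  shows "(\<lambda>(x, \<xi>). u \<xi> * v (x - \<xi>)) summable_on UNIV"
proof -
  have "bij_betw (\<lambda>(x, \<xi>). (\<xi>, x - \<xi>)) UNIV (UNIV :: ('g \<times> 'g) set)"
    by (rule bij_betwI[where g="\<lambda>(a, b). (a + b, a)"]) auto
  from summable_on_reindex_bij_betw[OF this, of "\<lambda>(a, b). u a * v b"] product_summable_on[OF assms]
  show ?thesis by (simp add: case_prod_unfold)
qed

lemma conv_integrand_summable_on:
  fixes u v :: "'g::ab_group_add \<Rightarrow> real"
  assumes "u summable_on UNIV" "v summable_on UNIV"
  shows "(\<lambda>\<xi>. u \<xi> * v (x - \<xi>)) summable_on UNIV"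
  using summable_on_SigmaD1[where f="\<lambda>x \<xi>. u \<xi> * v (x - \<xi>)" and A=UNIV and B="\<lambda>_. UNIV"]
    conv_pairs_summable_on[OF assms] by auto

lemma conv_summable_on:
  fixes u v :: "'g::ab_group_add \<Rightarrow> real"
  assumes "u summable_on UNIV" "v summable_on UNIV"
  shows "conv u v summable_on UNIV"
  unfolding conv_def
  using summable_on_Sigma_banach[where f="\<lambda>x \<xi>. u \<xi> * v (x - \<xi>)" and A=UNIV and B="\<lambda>_. UNIV"]
    conv_pairs_summable_on[OF assms] by auto

lemma infsum_abs_conv_le:
  fixes u v :: "'g::ab_group_add \<Rightarrow> real"
  assumes u: "u summable_on UNIV" and v: "v summable_on UNIV"
  shows "(\<Sum>\<^sub>\<infinity>x. \<bar>conv u v x\<bar>) \<le> (\<Sum>\<^sub>\<infinity>x. \<bar>u x\<bar>) * (\<Sum>\<^sub>\<infinity>x. \<bar>v x\<bar>)"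
proof -
  have au: "(\<lambda>x. \<bar>u x\<bar>) summable_on UNIV" and av: "(\<lambda>x. \<bar>v x\<bar>) summable_on UNIV"
    using u v by (simp_all add: summable_on_abs_iff_real)
  have "(\<Sum>\<^sub>\<infinity>x. \<bar>conv u v x\<bar>) \<le> (\<Sum>\<^sub>\<infinity>x. conv (\<lambda>x. \<bar>u x\<bar>) (\<lambda>x. \<bar>v x\<bar>) x)"
  proof (rule infsum_mono)
    fix x
    have "norm (conv u v x) \<le> (\<Sum>\<^sub>\<infinity>\<xi>. norm (u \<xi> * v (x - \<xi>)))"
      unfolding conv_def using conv_integrand_summable_on[OF u v]
      by (intro norm_infsum_bound) (simp add: summable_on_abs_iff_real)
    then show "\<bar>conv u v x\<bar> \<le> conv (\<lambda>x. \<bar>u x\<bar>) (\<lambda>x. \<bar>v x\<bar>) x"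
      by (simp add: conv_def abs_mult)
  qed (use conv_summable_on[OF u v] conv_summable_on[OF au av] in \<open>simp_all add: summable_on_abs_iff_real\<close>)
  also have "\<dots> = (\<Sum>\<^sub>\<infinity>\<xi>. \<Sum>\<^sub>\<infinity>x. \<bar>u \<xi>\<bar> * \<bar>v (x - \<xi>)\<bar>)"
    unfolding conv_def
    by (rule infsum_swap_banach) (use conv_pairs_summable_on[OF au av] in simp)
  also have "\<dots> = (\<Sum>\<^sub>\<infinity>\<xi>. \<bar>u \<xi>\<bar> * (\<Sum>\<^sub>\<infinity>x. \<bar>v x\<bar>))"
  proof (rule infsum_cong)
    fix \<xi>
    have "bij_betw (\<lambda>x. x - \<xi>) UNIV (UNIV :: 'g set)"
      by (rule bij_betwI[where g="\<lambda>y. y + \<xi>"]) auto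
    from infsum_reindex_bij_betw[OF this, of "\<lambda>y. \<bar>v y\<bar>"]
    show "(\<Sum>\<^sub>\<infinity>x. \<bar>u \<xi>\<bar> * \<bar>v (x - \<xi>)\<bar>) = \<bar>u \<xi>\<bar> * (\<Sum>\<^sub>\<infinity>x. \<bar>v x\<bar>)"
      by (simp add: infsum_cmult_right')
  qed
  also have "\<dots> = (\<Sum>\<^sub>\<infinity>x. \<bar>u x\<bar>) * (\<Sum>\<^sub>\<infinity>x. \<bar>v x\<bar>)"
    by (simp add: infsum_cmult_left')
  finally show ?thesis .
qed

lemma conv_commute:
  fixes u v :: "'g::ab_group_add \<Rightarrow> real"
  shows "conv u v = conv v u"
proof
  fix x
  have "bij_betw (\<lambda>\<eta>. x - \<eta>) UNIV (UNIV :: 'g set)"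
    by (rule bij_betwI[where g="\<lambda>\<eta>. x - \<eta>"]) auto
  from infsum_reindex_bij_betw[OF this, of "\<lambda>\<xi>. u \<xi> * v (x - \<xi>)"]
  show "conv u v x = conv v u x"
    by (simp add: conv_def mult.commute)
qed

lemma conv_assoc:
  fixes u v w :: "'g::ab_group_add \<Rightarrow> real"
  assumes u: "u summable_on UNIV" and v: "v summable_on UNIV" and w: "w summable_on UNIV"
  shows "conv (conv u v) w = conv u (conv v w)"
proof
  fix x
  define B where "B = (\<Sum>\<^sub>\<infinity>x. \<bar>w x\<bar>)"
  have dominant: "(\<lambda>p. B * \<bar>(case p of (\<zeta>, \<xi>) \<Rightarrow> u \<xi> * v (\<zeta> - \<xi>))\<bar>) summable_on UNIV"
    using conv_pairs_summable_on[OF u v]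
    by (intro summable_on_cmult_right) (simp add: summable_on_abs_iff_real)
  have bound: "\<bar>u \<xi> * v (\<zeta> - \<xi>) * w (x - \<zeta>)\<bar> \<le> B * \<bar>u \<xi> * v (\<zeta> - \<xi>)\<bar>" for \<zeta> \<xi>
    using abs_le_infsum_abs[OF w, of "x - \<zeta>"]
    by (simp add: B_def abs_mult mult.commute mult_right_mono)
  have "(\<lambda>p. \<bar>case p of (\<zeta>, \<xi>) \<Rightarrow> u \<xi> * v (\<zeta> - \<xi>) * w (x - \<zeta>)\<bar>) summable_on UNIV"
    by (rule summable_on_comparison_test[OF dominant]) (use bound in \<open>auto split: prod.splits\<close>)
  then have summable: "(\<lambda>(\<zeta>, \<xi>). u \<xi> * v (\<zeta> - \<xi>) * w (x - \<zeta>)) summable_on UNIV"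
    by (simp only: summable_on_abs_iff_real)
  have "conv (conv u v) w x = (\<Sum>\<^sub>\<infinity>\<zeta>. \<Sum>\<^sub>\<infinity>\<xi>. u \<xi> * v (\<zeta> - \<xi>) * w (x - \<zeta>))"
    unfolding conv_def by (simp add: infsum_cmult_left')
  also have "\<dots> = (\<Sum>\<^sub>\<infinity>\<xi>. \<Sum>\<^sub>\<infinity>\<zeta>. u \<xi> * v (\<zeta> - \<xi>) * w (x - \<zeta>))"
    by (rule infsum_swap_banach) (use summable in simp)
  also have "\<dots> = (\<Sum>\<^sub>\<infinity>\<xi>. u \<xi> * conv v w (x - \<xi>))"
  proof (rule infsum_cong)
    fix \<xi>
    have "bij_betw (\<lambda>\<eta>. \<eta> + \<xi>) UNIV (UNIV :: 'g set)"
      by (rule bij_betwI[where g="\<lambda>\<eta>. \<eta> - \<xi>"]) auto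
    from infsum_reindex_bij_betw[OF this, of "\<lambda>\<zeta>. v (\<zeta> - \<xi>) * w (x - \<zeta>)"]
    show "(\<Sum>\<^sub>\<infinity>\<zeta>. u \<xi> * v (\<zeta> - \<xi>) * w (x - \<zeta>)) = u \<xi> * conv v w (x - \<xi>)"
      by (simp add: conv_def infsum_cmult_right' mult.assoc algebra_simps)
  qed
  also have "\<dots> = conv u (conv v w) x" by (simp add: conv_def)
  finally show "conv (conv u v) w x = conv u (conv v w) x" .
qed

lemma conv_add_right:
  fixes u v w :: "'g::ab_group_add \<Rightarrow> real"
  assumes "u summable_on UNIV" "v summable_on UNIV" "w summable_on UNIV"
  shows "conv u (\<lambda>x. v x + w x) = (\<lambda>x. conv u v x + conv u w x)"
  unfolding conv_def
  using infsum_add[OF conv_integrand_summable_on[OF assms(1,2)] conv_integrand_summable_on[OF assms(1,3)]]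
  by (simp add: distrib_left)

lemma conv_cmult_right: "conv u (\<lambda>x. c * v x) = (\<lambda>x. c * conv u v x)"
  by (simp add: conv_def algebra_simps infsum_cmult_right')

lemma conv_cmult_left: "conv (\<lambda>x. c * u x) v = (\<lambda>x. c * conv u v x)"
  using conv_cmult_right[of v c u] by (simp add: conv_commute[of _ v])

lemma has_sum_unit_impulse_mult: "((\<lambda>\<xi>. unit_impulse \<xi> * g \<xi>) has_sum g 0) UNIV"
  by (rule has_sum_finite_neutralI[where B="{0}"]) (auto simp: unit_impulse_def)

lemma conv_unit_impulse_left: "conv unit_impulse u = u"
proof
  fix x
  show "conv unit_impulse u x = u x"
    using has_sum_unit_impulse_mult[of "\<lambda>\<xi>. u (x - \<xi>)", THEN infsumI] by (simp add: conv_def)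
qed

lemma unit_impulse_summable_on: "unit_impulse summable_on UNIV"
  using has_sum_unit_impulse_mult[of "\<lambda>_. 1"] by (auto intro: has_sum_imp_summable)

lemma infsum_abs_unit_impulse: "(\<Sum>\<^sub>\<infinity>x. \<bar>unit_impulse x\<bar>) = 1"
  using has_sum_unit_impulse_mult[of "\<lambda>_. 1", THEN infsumI] by (simp add: unit_impulse_def)

section \<open>The Banach algebra \<open>l\<^sub>1\<close>\<close>

typedef ('g::ab_group_add) l1 = "{u :: 'g \<Rightarrow> real. u summable_on UNIV}"
  by (rule exI[of _ "\<lambda>_. 0"]) simp

setup_lifting type_definition_l1

instantiation l1 :: (ab_group_add) real_vector
begin
lift_definition zero_l1 :: "'a l1" is "\<lambda>_. 0" by simp
lift_definition plus_l1 :: "'a l1 \<Rightarrow> 'a l1 \<Rightarrow> 'a l1" is "\<lambda>u v x. u x + v x"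
  by (rule summable_on_add)
lift_definition uminus_l1 :: "'a l1 \<Rightarrow> 'a l1" is "\<lambda>u x. - u x"
  by (simp add: summable_on_uminus)
lift_definition minus_l1 :: "'a l1 \<Rightarrow> 'a l1 \<Rightarrow> 'a l1" is "\<lambda>u v x. u x - v x"
  using summable_on_add[OF _ summable_on_uminus[THEN iffD2]] by fastforce
lift_definition scaleR_l1 :: "real \<Rightarrow> 'a l1 \<Rightarrow> 'a l1" is "\<lambda>c u x. c * u x"
  by (rule summable_on_cmult_right)
instance
  by standard (transfer; auto simp: algebra_simps)+
end

instantiation l1 :: (ab_group_add) real_normed_vector
begin
lift_definition norm_l1 :: "'a l1 \<Rightarrow> real" is "\<lambda>u. \<Sum>\<^sub>\<infinity>x. \<bar>u x\<bar>" .
definition dist_l1 :: "'a l1 \<Rightarrow> 'a l1 \<Rightarrow> real" where "dist_l1 x y = norm (x - y)"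
definition sgn_l1 :: "'a l1 \<Rightarrow> 'a l1" where "sgn_l1 x = x /\<^sub>R norm x"
definition uniformity_l1 :: "('a l1 \<times> 'a l1) filter" where
  "uniformity_l1 = (INF e\<in>{0<..}. principal {(x, y). dist x y < e})"
definition open_l1 :: "'a l1 set \<Rightarrow> bool" where
  "open_l1 U = (\<forall>x\<in>U. \<forall>\<^sub>F (x', y) in uniformity. x' = x \<longrightarrow> y \<in> U)"
instance
proof
  fix x y :: "'a l1" and a :: real
  show "dist x y = norm (x - y)" by (simp add: dist_l1_def)
  show "sgn x = x /\<^sub>R norm x" by (simp add: sgn_l1_def)
  show "norm x = 0 \<longleftrightarrow> x = 0"
  proof transfer
    fix u :: "'a \<Rightarrow> real" assume "u summable_on UNIV"
    then have zero: "u z = 0" if "(\<Sum>\<^sub>\<infinity>x. \<bar>u x\<bar>) = 0" for z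
      using nonneg_infsum_le_0D[of "\<lambda>x. \<bar>u x\<bar>" UNIV z] that by (simp add: summable_on_abs_iff_real)
    show "(\<Sum>\<^sub>\<infinity>x. \<bar>u x\<bar>) = 0 \<longleftrightarrow> u = (\<lambda>_. 0)"
    proof
      show "u = (\<lambda>_. 0)" if "(\<Sum>\<^sub>\<infinity>x. \<bar>u x\<bar>) = 0" by (intro ext zero that)
    qed simp
  qed
  show "norm (x + y) \<le> norm x + norm y"
    by transfer (rule infsum_abs_add_le)
  show "norm (a *\<^sub>R x) = \<bar>a\<bar> * norm x"
    by transfer (simp add: abs_mult infsum_cmult_right')
qed (simp_all add: uniformity_l1_def open_l1_def)
end

instantiation l1 :: (ab_group_add) comm_ring_1
begin
lift_definition one_l1 :: "'a l1" is unit_impulse by (rule unit_impulse_summable_on)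
lift_definition times_l1 :: "'a l1 \<Rightarrow> 'a l1 \<Rightarrow> 'a l1" is conv by (rule conv_summable_on)
instance
proof
  fix a b c :: "'a l1"
  show "a * b * c = a * (b * c)" by transfer (rule conv_assoc)
  show "a * b = b * a" by transfer (rule conv_commute)
  show "1 * a = a" by transfer (rule conv_unit_impulse_left)
  show "(a + b) * c = a * c + b * c"
  proof transfer
    fix u v w :: "'a \<Rightarrow> real"
    assume "u summable_on UNIV" "v summable_on UNIV" "w summable_on UNIV"
    then show "conv (\<lambda>x. u x + v x) w = (\<lambda>x. conv u w x + conv v w x)"
      using conv_add_right[of w u v] by (simp add: conv_commute[of w])
  qed
  show "(0 :: 'a l1) \<noteq> 1"
    by transfer (metis unit_impulse_def zero_neq_one)
qed
end

instance l1 :: (ab_group_add) real_normed_algebra_1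
proof
  fix a b :: "'a l1" and c :: real
  show "c *\<^sub>R a * b = c *\<^sub>R (a * b)" by transfer (rule conv_cmult_left)
  show "a * c *\<^sub>R b = c *\<^sub>R (a * b)" by transfer (rule conv_cmult_right)
  show "norm (a * b) \<le> norm a * norm b" by transfer (rule infsum_abs_conv_le)
  show "norm (1 :: 'a l1) = 1" by transfer (rule infsum_abs_unit_impulse)
qed

lemma Rep_l1_summable_on: "Rep_l1 a summable_on UNIV"
  using Rep_l1 by simp

lemma abs_Rep_l1_le_norm: "\<bar>Rep_l1 a x\<bar> \<le> norm a"
  unfolding norm_l1.rep_eq by (rule abs_le_infsum_abs[OF Rep_l1_summable_on])

lemma bounded_linear_Rep_l1_apply: "bounded_linear (\<lambda>a. Rep_l1 a x)"
  by (rule bounded_linear_intro[where K=1])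
     (simp_all add: plus_l1.rep_eq scaleR_l1.rep_eq abs_Rep_l1_le_norm)

lemma infsum_abs_diff_le_of_pointwise_limit:
  fixes R :: "nat \<Rightarrow> 'a \<Rightarrow> real"
  assumes lim: "\<And>x. (\<lambda>m. R m x) \<longlonglongrightarrow> u x"
    and bound: "\<And>m. m \<ge> N \<Longrightarrow> (\<lambda>x. v x - R m x) summable_on UNIV \<and> (\<Sum>\<^sub>\<infinity>x. \<bar>v x - R m x\<bar>) \<le> e"
  shows "(\<lambda>x. v x - u x) summable_on UNIV \<and> (\<Sum>\<^sub>\<infinity>x. \<bar>v x - u x\<bar>) \<le> e"
proof -
  have finite_le: "(\<Sum>x\<in>F. \<bar>v x - u x\<bar>) \<le> e" if "finite F" for F
  proof (rule LIMSEQ_le_const2)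
    show "(\<lambda>m. \<Sum>x\<in>F. \<bar>v x - R m x\<bar>) \<longlonglongrightarrow> (\<Sum>x\<in>F. \<bar>v x - u x\<bar>)"
      by (intro tendsto_intros lim)
    show "\<exists>N. \<forall>m\<ge>N. (\<Sum>x\<in>F. \<bar>v x - R m x\<bar>) \<le> e"
    proof (intro exI allI impI)
      fix m assume "m \<ge> N"
      with bound[of m] that show "(\<Sum>x\<in>F. \<bar>v x - R m x\<bar>) \<le> e"
        by (auto intro: order.trans[OF finite_sum_le_infsum] simp: summable_on_abs_iff_real)
    qed
  qed
  have "(\<lambda>x. \<bar>v x - u x\<bar>) summable_on UNIV"
    by (rule nonneg_bdd_above_summable_on) (use finite_le in \<open>auto intro!: bdd_aboveI2\<close>)
  with finite_le show ?thesis
    by (auto intro: infsum_le_finite_sums simp: summable_on_abs_iff_real)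
qed

instance l1 :: (ab_group_add) banach
proof
  fix X :: "nat \<Rightarrow> 'a l1"
  assume "Cauchy X"
  then have Cauchy: "\<exists>N. \<forall>m\<ge>N. \<forall>n\<ge>N. norm (X m - X n) < e" if "e > 0" for e
    using that by (simp add: Cauchy_def dist_norm)
  define R where "R n = Rep_l1 (X n)" for n
  have norm_diff: "norm (X n - X m) = (\<Sum>\<^sub>\<infinity>x. \<bar>R n x - R m x\<bar>)" for n m
    by (simp add: R_def norm_l1.rep_eq minus_l1.rep_eq)
  have pointwise: "\<bar>R m x - R n x\<bar> \<le> norm (X m - X n)" for m n x
    using abs_Rep_l1_le_norm[of "X m - X n" x] by (simp add: R_def minus_l1.rep_eq)
  have "Cauchy (\<lambda>n. R n x)" for x
  proof (rule metric_CauchyI)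
    fix e :: real assume "e > 0"
    with Cauchy obtain N where "\<forall>m\<ge>N. \<forall>n\<ge>N. norm (X m - X n) < e" by blast
    then show "\<exists>M. \<forall>m\<ge>M. \<forall>n\<ge>M. dist (R m x) (R n x) < e"
      using pointwise by (metis dist_real_def le_less_trans)
  qed
  then have "convergent (\<lambda>n. R n x)" for x
    by (simp add: Cauchy_convergent_iff)
  then obtain u where u: "\<And>x. (\<lambda>n. R n x) \<longlonglongrightarrow> u x"
    unfolding convergent_def by metis
  have tail: "(\<lambda>x. R n x - u x) summable_on UNIV \<and> (\<Sum>\<^sub>\<infinity>x. \<bar>R n x - u x\<bar>) \<le> e"
    if N: "\<forall>m\<ge>N. \<forall>n\<ge>N. norm (X m - X n) < e" and "n \<ge> N" for e N n
  proof (rule infsum_abs_diff_le_of_pointwise_limit[OF u])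
    fix m assume "m \<ge> N"
    have "(\<lambda>x. R n x - R m x) = Rep_l1 (X n - X m)"
      by (simp add: R_def minus_l1.rep_eq fun_eq_iff)
    moreover have "norm (X n - X m) < e" using N \<open>n \<ge> N\<close> \<open>m \<ge> N\<close> by blast
    ultimately show "(\<lambda>x. R n x - R m x) summable_on UNIV \<and> (\<Sum>\<^sub>\<infinity>x. \<bar>R n x - R m x\<bar>) \<le> e"
      using norm_diff[of n m] by (simp add: Rep_l1_summable_on)
  qed
  obtain N1 where "\<forall>m\<ge>N1. \<forall>n\<ge>N1. norm (X m - X n) < 1" using Cauchy[of 1] by auto
  from tail[OF this order.refl] have "(\<lambda>x. - (R N1 x - u x)) summable_on UNIV"
    by (simp only: summable_on_uminus)
  then have "(\<lambda>x. R N1 x + - (R N1 x - u x)) summable_on UNIV"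
    using Rep_l1_summable_on[of "X N1"] by (intro summable_on_add) (simp_all add: R_def)
  then have "u summable_on UNIV" by simp
  then have Rep_U: "Rep_l1 (Abs_l1 u) = u" by (simp add: Abs_l1_inverse)
  have "X \<longlonglongrightarrow> Abs_l1 u"
  proof (rule LIMSEQ_I)
    fix r :: real assume "r > 0"
    then obtain N where "\<forall>m\<ge>N. \<forall>n\<ge>N. norm (X m - X n) < r / 2" using Cauchy[of "r / 2"] by auto
    then have "norm (X n - Abs_l1 u) \<le> r / 2" if "n \<ge> N" for n
      using tail[of N "r / 2" n] that by (simp add: R_def norm_l1.rep_eq minus_l1.rep_eq Rep_U)
    with \<open>r > 0\<close> show "\<exists>N. \<forall>n\<ge>N. norm (X n - Abs_l1 u) < r" by force
  qed
  then show "convergent X" by (rule convergentI)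
qed

section \<open>Norm-continuous semigroups in Banach algebras\<close>

text \<open>The inverse is the Neumann series \<open>\<Sum>\<^sub>n (1 - y)\<^sup>n\<close>.\<close>

lemma ex_right_inverse_if_norm_one_minus_less_1:
  fixes y :: "'a::{real_normed_algebra_1,banach}"
  assumes "norm (1 - y) < 1"
  shows "\<exists>w. y * w = 1"
proof -
  define z where "z = 1 - y"
  have z: "norm z < 1" using assms by (simp add: z_def)
  have "summable (\<lambda>n. z ^ n)"
    by (rule summable_comparison_test[OF _ summable_geometric[of "norm z"]])
       (use z in \<open>auto simp: norm_power_ineq\<close>)
  then have "(\<lambda>n. y * z ^ n) sums (y * (\<Sum>n. z ^ n))"
    by (intro sums_mult summable_sums)
  moreover have "(\<lambda>n. z ^ n - z ^ Suc n) sums (z ^ 0 - 0)"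
    by (rule telescope_sums'[OF LIMSEQ_power_zero[OF z]])
  then have "(\<lambda>n. y * z ^ n) sums 1" by (simp add: z_def algebra_simps)
  ultimately show ?thesis using sums_unique2 by blast
qed

locale norm_continuous_semigroup =
  fixes P :: "real \<Rightarrow> 'a::{real_normed_algebra_1,banach}"
  assumes at_0 [simp]: "P 0 = 1"
    and add: "\<And>s t. 0 \<le> s \<Longrightarrow> 0 \<le> t \<Longrightarrow> P (s + t) = P s * P t"
    and tendsto_1: "(P \<longlongrightarrow> 1) (at_right 0)"
begin

lemma mult_power: "0 \<le> h \<Longrightarrow> P (real n * h) = P h ^ n"
proof (induction n)
  case (Suc n)
  then have "P (h + real n * h) = P h * P (real n * h)" by (simp add: add)
  with Suc show ?case by (simp add: algebra_simps)
qed simp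

lemma eventually_close_to_1:
  assumes "c > 0"
  obtains e where "e > 0" "\<And>h. 0 \<le> h \<Longrightarrow> h \<le> e \<Longrightarrow> norm (P h - 1) < c"
proof -
  obtain b where b: "b > 0" "\<And>h. 0 < h \<Longrightarrow> h < b \<Longrightarrow> dist (P h) 1 < c"
    using tendsto_1 assms unfolding tendsto_iff eventually_at_right_field by blast
  show thesis
  proof (rule that[of "b / 2"])
    fix h assume "0 \<le> h" "h \<le> b / 2"
    then show "norm (P h - 1) < c"
      using b assms by (cases "h = 0") (auto simp: dist_norm)
  qed (use b in simp)
qed

lemma bounded_on_interval: "\<exists>M. \<forall>r\<in>{0..b}. norm (P r) \<le> M"
proof -
  obtain e where e: "e > 0" "\<And>h. 0 \<le> h \<Longrightarrow> h \<le> e \<Longrightarrow> norm (P h - 1) < 1"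
    using eventually_close_to_1[of 1] by auto
  define n where "n = nat \<lceil>b / e\<rceil> + 1"
  have n: "real n > 0" "b \<le> real n * e"
    using real_nat_ceiling_ge[of "b / e"] e(1) by (auto simp: n_def field_simps)
  have "norm (P r) \<le> 2 ^ n" if "r \<in> {0..b}" for r
  proof -
    define h where "h = r / real n"
    have h: "0 \<le> h" "h \<le> e" using that n by (auto simp: h_def field_simps)
    have "norm (P h) \<le> 2"
      using e(2)[OF h] norm_triangle_ineq2[of "P h" 1] by simp
    have "P r = P (real n * h)" using n by (simp add: h_def)
    also have "\<dots> = P h ^ n" by (rule mult_power[OF h(1)])
    finally
    have "norm (P r) \<le> norm (P h) ^ n" by (simp add: norm_power_ineq)
    also have "\<dots> \<le> 2 ^ n" by (rule power_mono[OF \<open>norm (P h) \<le> 2\<close>]) simp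
    finally show ?thesis .
  qed
  then show ?thesis by blast
qed

lemma dist_add_le:
  assumes "0 \<le> s" "0 \<le> h"
  shows "dist (P (s + h)) (P s) \<le> norm (P s) * norm (P h - 1)"
proof -
  have "dist (P (s + h)) (P s) = norm (P s * (P h - 1))"
    using assms by (simp add: add dist_norm right_diff_distrib)
  then show ?thesis by (simp add: norm_mult_ineq)
qed

lemma continuous: "continuous_on {0..} P"
  unfolding continuous_on_iff
proof (intro ballI allI impI)
  fix s c :: real assume s: "s \<in> {0..}" and c: "c > 0"
  obtain M where M: "\<And>r. r \<in> {0..s + 1} \<Longrightarrow> norm (P r) \<le> M"
    using bounded_on_interval by blast
  define M' where "M' = max M 1"
  have M'_pos: "M' > 0" by (simp add: M'_def)
  have M': "norm (P r) \<le> M'" if "r \<in> {0..s + 1}" for r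
    using M[OF that] by (simp add: M'_def)
  obtain e where e: "e > 0" "\<And>h. 0 \<le> h \<Longrightarrow> h \<le> e \<Longrightarrow> norm (P h - 1) < c / M'"
    using eventually_close_to_1[of "c / M'"] c M'_pos by auto
  have close: "dist (P (r + h)) (P r) < c" if "r \<in> {0..s + 1}" "0 \<le> h" "h \<le> e" for r h
  proof -
    have "dist (P (r + h)) (P r) \<le> M' * norm (P h - 1)"
      using that by (intro order.trans[OF dist_add_le mult_right_mono] M') auto
    also have "\<dots> < M' * (c / M')"
      using e(2)[OF that(2,3)] M'_pos by (intro mult_strict_left_mono) auto
    finally show ?thesis using M'_pos by simp
  qed
  show "\<exists>d>0. \<forall>t\<in>{0..}. dist t s < d \<longrightarrow> dist (P t) (P s) < c"
  proof (intro exI[of _ "min e 1"] conjI ballI impI)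
    fix t :: real assume t: "t \<in> {0..}" and d: "dist t s < min e 1"
    show "dist (P t) (P s) < c"
    proof (cases "s \<le> t")
      case True
      then show ?thesis using close[of s "t - s"] s d by (auto simp: dist_real_def)
    next
      case False
      then show ?thesis using close[of t "s - t"] t d by (auto simp: dist_real_def dist_commute)
    qed
  qed (use e in simp)
qed

lemma integrable_on: "{a..b} \<subseteq> {0..} \<Longrightarrow> P integrable_on {a..b}"
  by (rule integrable_continuous_real, rule continuous_on_subset[OF continuous])

lemma mult_integral: "0 \<le> s \<Longrightarrow> 0 \<le> t \<Longrightarrow> P s * integral {0..t} P = integral {s..s + t} P"
proof -
  assume st: "0 \<le> s" "0 \<le> t"
  have "P s * integral {0..t} P = integral {0..t} ((*) (P s) \<circ> P)"
    by (rule integral_linear[OF integrable_on bounded_linear_mult_right, symmetric]) auto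
  also have "\<dots> = integral {0..t} (P \<circ> (+) s)"
    by (rule integral_cong) (use st in \<open>auto simp: add\<close>)
  also have "\<dots> = integral {s..s + t} P"
    using integral_shift_Icc_real[of 0 t P s] by (simp add: add.commute)
  finally show ?thesis .
qed

text \<open>The mean \<open>(1/e) \<integral>\<^sub>0\<^sup>e P\<close> is within distance \<open>1/2\<close> of \<open>1\<close>, hence invertible.\<close>

lemma integral_right_invertible: "\<exists>e>0. \<exists>W. integral {0..e} P * W = 1"
proof -
  obtain e where e: "e > 0" "\<And>h. 0 \<le> h \<Longrightarrow> h \<le> e \<Longrightarrow> norm (P h - 1) < 1/2"
    using eventually_close_to_1[of "1/2"] by auto
  define I where "I = integral {0..e} P"
  have "((\<lambda>h. P h - 1) has_integral (I - e *\<^sub>R 1)) {0..e}"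
    unfolding I_def using has_integral_diff[OF integrable_integral[OF integrable_on] has_integral_const_real[of 1 0 e]] e
    by simp
  then have "norm (I - e *\<^sub>R 1) \<le> 1/2 * Henstock_Kurzweil_Integration.content {0..e}"
    by (rule has_integral_bound_real[where S="{}", rotated 2]) (use e in \<open>auto intro: less_imp_le\<close>)
  then have "norm (I - e *\<^sub>R 1) \<le> 1/2 * e" using e(1) by simp
  then have "norm (1 - (1/e) *\<^sub>R I) < 1"
    using e(1) norm_scaleR[of "1/e" "I - e *\<^sub>R 1"] by (simp add: algebra_simps norm_minus_commute)
  then obtain w where "((1/e) *\<^sub>R I) * w = 1"
    using ex_right_inverse_if_norm_one_minus_less_1 by blast
  then have "I * ((1/e) *\<^sub>R w) = 1" by simp
  with e(1) show ?thesis unfolding I_def by blast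
qed

theorem has_vector_derivative: "\<exists>H. \<forall>s\<ge>0. (P has_vector_derivative P s * H) (at s within {0..})"
proof -
  obtain e W where e: "e > 0" and W: "integral {0..e} P * W = 1"
    using integral_right_invertible by blast
  define G where "G u = integral {0..u} P" for u
  have P_eq: "P s = (G (s + e) - G s) * W" if "0 \<le> s" for s
  proof -
    have "G (s + e) - G s = integral {s..s + e} P"
      using Henstock_Kurzweil_Integration.integral_combine[of 0 s "s + e" P] integrable_on[of 0 "s + e"] that e
      by (simp add: G_def algebra_simps)
    have "P s = P s * integral {0..e} P * W" using W by (simp add: mult.assoc)
    then show ?thesis using mult_integral[OF that, of e] e \<open>G (s + e) - G s = _\<close> by simp
  qed
  have G': "(G has_vector_derivative P u) (at u within {0..b})" if "u \<in> {0..b}" for u b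
    unfolding G_def using that by (intro integral_has_vector_derivative continuous_on_subset[OF continuous]) auto
  have "(P has_vector_derivative P s * ((P e - 1) * W)) (at s within {0..})" if s: "0 \<le> s" for s
  proof -
    define b where "b = s + 1"
    have "(G has_vector_derivative P (s + e)) (at (s + e) within (\<lambda>u. u + e) ` {0..b})"
      by (rule has_vector_derivative_within_subset[OF G'[of _ "b + e"]]) (use s e in \<open>auto simp: b_def\<close>)
    then have "((G \<circ> (\<lambda>u. u + e)) has_vector_derivative 1 *\<^sub>R P (s + e)) (at s within {0..b})"
      by (intro vector_diff_chain_within) (auto intro!: derivative_eq_intros)
    then have "((\<lambda>u. (G (u + e) - G u) * W) has_vector_derivative (P (s + e) - P s) * W) (at s within {0..b})"
      using s by (intro has_vector_derivative_mult_left has_vector_derivative_diff G') (auto simp: o_def b_def e less_imp_le)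
    moreover have "at s within {0..b} = at s within {0..}"
      by (rule at_within_nhd[of _ "{..<b}"]) (auto simp: b_def e less_imp_le)
    moreover have "(P (s + e) - P s) * W = P s * ((P e - 1) * W)"
      using add[of s e] s e by (simp add: right_diff_distrib left_diff_distrib mult.assoc)
    ultimately show ?thesis
      using P_eq s by (auto intro: has_vector_derivative_transform_within[where d=1])
  qed
  then show ?thesis by blast
qed

end

section \<open>Pre-scale-space kernels\<close>

lemma in_l1_iff_summable_on: "in_l1 u \<longleftrightarrow> u summable_on UNIV"
  by (simp add: in_l1_def summable_on_abs_iff_real)

lemma ddelta_eq_unit_impulse: "ddelta = unit_impulse"
  by (simp add: ddelta_def unit_impulse_def fun_eq_iff)

lemma dconv_eq_conv: "dconv = conv"
  by (simp add: dconv_def conv_def fun_eq_iff)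

lemma linear_on_l1_conv:
  assumes "h summable_on UNIV"
  shows "linear_on_l1 (conv h)"
  unfolding linear_on_l1_def in_l1_iff_summable_on
  using conv_add_right[OF assms summable_on_cmult_right summable_on_cmult_right]
  by (simp add: conv_cmult_right)

lemma shift_invariant_on_l1_conv: "shift_invariant_on_l1 (conv h)"
  by (simp add: shift_invariant_on_l1_def conv_def algebra_simps)

text \<open>Summability for small scales is condition (iii); the semigroup property propagates it
  to all scales, since convolution preserves summability.\<close>

lemma pre_scale_space_kernel_summable_on:
  assumes T: "pre_scale_space_kernel T" and "0 \<le> s"
  shows "(\<lambda>x. T x s) summable_on UNIV"
proof -
  have T0: "(\<lambda>x. T x 0) = unit_impulse"
    and add: "\<And>s t. 0 \<le> s \<Longrightarrow> 0 \<le> t \<Longrightarrow> conv (\<lambda>x. T x s) (\<lambda>x. T x t) = (\<lambda>x. T x (s + t))"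
    and "\<forall>\<^sub>F h in at_right 0. in_l1 (\<lambda>x. T x h - ddelta x)"
    using T by (simp_all add: pre_scale_space_kernel_def ddelta_eq_unit_impulse dconv_eq_conv)
  then obtain b where b: "b > 0" "\<And>h. 0 < h \<Longrightarrow> h < b \<Longrightarrow> (\<lambda>x. T x h - unit_impulse x) summable_on UNIV"
    unfolding eventually_at_right_field in_l1_iff_summable_on ddelta_eq_unit_impulse by auto
  define e where "e = b / 2"
  have e: "0 < e" "e < b" using b(1) by (simp_all add: e_def)
  have small: "(\<lambda>x. T x h) summable_on UNIV" if "0 \<le> h" "h \<le> e" for h
  proof (cases "h = 0")
    case False
    with that e have "(\<lambda>x. (T x h - unit_impulse x) + unit_impulse x) summable_on UNIV"
      by (intro summable_on_add b(2) unit_impulse_summable_on) auto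
    then show ?thesis by simp
  qed (simp add: T0 unit_impulse_summable_on)
  have "\<forall>s. 0 \<le> s \<and> s \<le> real n * e \<longrightarrow> (\<lambda>x. T x s) summable_on UNIV" for n
  proof (induction n)
    case (Suc n)
    show ?case
    proof (intro allI impI)
      fix s assume s: "0 \<le> s \<and> s \<le> real (Suc n) * e"
      show "(\<lambda>x. T x s) summable_on UNIV"
      proof (cases "s \<le> e")
        case False
        then have "conv (\<lambda>x. T x e) (\<lambda>x. T x (s - e)) summable_on UNIV"
          using Suc.IH s small[of e] e by (intro conv_summable_on) (auto simp: algebra_simps)
        with add[of e "s - e"] False e show ?thesis by simp
      qed (use small s in auto)
    qed
  qed (use small e in auto)
  moreover have "s \<le> real (nat \<lceil>s / e\<rceil>) * e"
    using real_nat_ceiling_ge[of "s / e"] e(1) by (simp add: field_simps)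
  ultimately show ?thesis using \<open>0 \<le> s\<close> by blast
qed

definition kernel_l1 :: "(int ^ 'd::finite \<Rightarrow> real \<Rightarrow> real) \<Rightarrow> real \<Rightarrow> (int ^ 'd) l1" where
  "kernel_l1 T s = Abs_l1 (\<lambda>x. T x s)"

lemma Rep_kernel_l1:
  "pre_scale_space_kernel T \<Longrightarrow> 0 \<le> s \<Longrightarrow> Rep_l1 (kernel_l1 T s) = (\<lambda>x. T x s)"
  unfolding kernel_l1_def by (simp add: Abs_l1_inverse pre_scale_space_kernel_summable_on)

lemma norm_continuous_semigroup_kernel_l1:
  assumes T: "pre_scale_space_kernel T"
  shows "norm_continuous_semigroup (kernel_l1 T)"
proof
  show "kernel_l1 T 0 = 1"
    using T by (simp add: Rep_l1_inject[symmetric] Rep_kernel_l1 one_l1.rep_eq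
        pre_scale_space_kernel_def ddelta_eq_unit_impulse)
  show "kernel_l1 T (s + t) = kernel_l1 T s * kernel_l1 T t" if "0 \<le> s" "0 \<le> t" for s t
    using T that by (simp add: Rep_l1_inject[symmetric] Rep_kernel_l1 times_l1.rep_eq
        pre_scale_space_kernel_def dconv_eq_conv)
  have "\<forall>\<^sub>F h in at_right 0. l1_norm (\<lambda>x. T x h - ddelta x) = norm (kernel_l1 T h - 1)"
    using eventually_at_right_less[of "0 :: real"]
    by eventually_elim (simp add: T Rep_kernel_l1 l1_norm_def norm_l1.rep_eq minus_l1.rep_eq
        one_l1.rep_eq ddelta_eq_unit_impulse)
  with T have "((\<lambda>h. norm (kernel_l1 T h - 1)) \<longlongrightarrow> 0) (at_right 0)"
    unfolding pre_scale_space_kernel_def by (auto intro: tendsto_cong[THEN iffD1])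
  then show "(kernel_l1 T \<longlongrightarrow> 1) (at_right 0)"
    by (simp add: tendsto_norm_zero_iff Lim_null[symmetric])
qed

lemma pre_scale_space_rep_eq_Rep_l1:
  assumes "in_l1 f" "pre_scale_space_kernel T" "0 \<le> s"
  shows "(\<lambda>\<xi>. pre_scale_space_rep T f \<xi> s) = Rep_l1 (kernel_l1 T s * Abs_l1 f)"
  using assms by (simp add: times_l1.rep_eq Rep_kernel_l1 Abs_l1_inverse in_l1_iff_summable_on
      pre_scale_space_rep_def conv_def fun_eq_iff)

lemma pre_scale_space_rep_has_real_derivative:
  assumes f: "in_l1 f" and T: "pre_scale_space_kernel T" and s: "0 \<le> s"
    and H: "(kernel_l1 T has_vector_derivative kernel_l1 T s * H) (at s within {0..})"
  shows "((\<lambda>t. pre_scale_space_rep T f x t) has_real_derivative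
           conv (Rep_l1 H) (\<lambda>\<xi>. pre_scale_space_rep T f \<xi> s) x) (at s within {0..})"
proof -
  define \<phi> where "\<phi> a = Rep_l1 (a * Abs_l1 f) x" for a
  have "bounded_linear \<phi>"
    unfolding \<phi>_def
    using bounded_linear_compose[OF bounded_linear_Rep_l1_apply[of x] bounded_linear_mult_left[of "Abs_l1 f"]]
    by (simp add: o_def)
  from bounded_linear.has_vector_derivative[OF this H]
  have "((\<lambda>t. \<phi> (kernel_l1 T t)) has_real_derivative \<phi> (kernel_l1 T s * H)) (at s within {0..})"
    by (simp add: has_real_derivative_iff_has_vector_derivative)
  moreover have "\<phi> (kernel_l1 T s * H) = conv (Rep_l1 H) (\<lambda>\<xi>. pre_scale_space_rep T f \<xi> s) x"
    using pre_scale_space_rep_eq_Rep_l1[OF f T s] by (simp add: \<phi>_def times_l1.rep_eq ac_simps)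
  moreover have "\<phi> (kernel_l1 T t) = pre_scale_space_rep T f x t" if "t \<in> {0..}" for t
    using pre_scale_space_rep_eq_Rep_l1[OF f T, of t] that by (simp add: \<phi>_def fun_eq_iff)
  ultimately show ?thesis
    using s by (auto intro: has_field_derivative_transform_within[where d=1])
qed

theorem lemmaA3:
  fixes f :: "int ^ 'd::finite \<Rightarrow> real"
    and T :: "int ^ 'd \<Rightarrow> real \<Rightarrow> real"
  assumes "in_l1 f"
    and "pre_scale_space_kernel T"
  shows "\<exists>A :: 'd dsignal \<Rightarrow> 'd dsignal.
           linear_on_l1 A \<and> shift_invariant_on_l1 A \<and>
           (\<forall>x. \<forall>s\<ge>0.
              ((\<lambda>t. pre_scale_space_rep T f x t) has_real_derivative
                 A (\<lambda>\<xi>. pre_scale_space_rep T f \<xi> s) x) (at s within {0..}))"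
proof -
  interpret norm_continuous_semigroup "kernel_l1 T"
    using assms(2) by (rule norm_continuous_semigroup_kernel_l1)
  obtain H where H: "\<And>s. 0 \<le> s \<Longrightarrow> (kernel_l1 T has_vector_derivative kernel_l1 T s * H) (at s within {0..})"
    using has_vector_derivative by blast
  show ?thesis
    using linear_on_l1_conv[OF Rep_l1_summable_on] shift_invariant_on_l1_conv
      pre_scale_space_rep_has_real_derivative[OF assms _ H]
    by blast
qed

end
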